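(* Let $(E,\mathcal{I}_1),\dots,(E,\mathcal{I}_k)$ be matroids on a common finite ground set $E$ with weight functions $w_i:E\to\mathbb{R}_+$, and let $\mathrm{Op}^{(1)},\mathrm{Op}^{(2)}\in\{\max,\min,\sum\}$. Let $r=\sum_{i\in[k]}\mathrm{rank}(\mathcal{I}_i)-|E|$, assumed nonnegative, and let $D=\{d_1,\dots,d_r\}$ be a set of $r$ new elements with $D\cap E=\emptyset$. For each $i\in[k]$ define $$\mathcal{I}_i'=\{D'\subseteq D\mid |D'|\le \mathrm{rank}(\mathcal{I}_i)-1\},\qquad \overline{\mathcal{I}}_i=\{I\cup D'\mid I\in\mathcal{I}_i,\ D'\in\mathcal{I}_i',\ |I\cup D'|\le \mathrm{rank}(\mathcal{I}_i)\}$$ (so $(E\cup D,\overline{\mathcal{I}}_i)$ is the $\mathrm{rank}(\mathcal{I}_i)$-truncation of the matroid union of $(E,\mathcal{I}_i)$ and the uniform matroid $(D,\mathcal{I}_i')$), and define $\overline{w}_i:E\cup D\to\mathbb{R}_+$ by $\overline{w}_i(e)=w_i(e)$ for $e\in E$, and for $e\in D$: $\overline{w}_i(e)=\min_{e'\in E}w_i(e')$ if $\mathrm{Op}^{(2)}=\max$, $\overline{w}_i(e)=\max_{e'\in E}w_i(e')$ if $\mathrm{Op}^{(2)}=\min$, and $\overline{w}_i(e)=0$ if $\mathrm{Op}^{(2)}=\sum$. Then the minimum $(\mathrm{Op}^{(1)},\mathrm{Op}^{(2)})$-value over feasible partitions of $E$ with respect to $(\mathcal{I}_i,w_i)_{i\in[k]}$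 equals the minimum $(\mathrm{Op}^{(1)},\mathrm{Op}^{(2)})$-value over feasible partitions of $E\cup D$ with respect to $(\overline{\mathcal{I}}_i,\overline{w}_i)_{i\in[k]}$.
   Context: For matroids $(E,\mathcal{I}_i)$, $i\in[k]=\{1,\dots,k\}$, a feasible partition of $E$ is a tuple $(I_1,\dots,I_k)$ of pairwise disjoint sets with $\bigcup_i I_i=E$, $I_i\neq\emptyset$ and $I_i\in\mathcal{I}_i$ for all $i$. For weights $w_i$, the $(\mathrm{Op}^{(1)},\mathrm{Op}^{(2)})$-value of a partition $(I_1,\dots,I_k)$ is $\mathrm{Op}^{(1)}_{i\in[k]}\mathrm{Op}^{(2)}_{e\in I_i}w_i(e)$ (e.g. the $(\sum,\max)$-value is $\sum_{i}\max_{e\in I_i}w_i(e)$). $\mathrm{rank}(\mathcal{I})$ denotes the common size of the bases of the matroid. Note $r\ge 0$ whenever $E$ has a feasible partition. *)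

theory Defs
  imports Complex_Main
begin

definition matroid :: "'a set \<Rightarrow> 'a set set \<Rightarrow> bool" where
  "matroid E I \<longleftrightarrow> finite E \<and> I \<subseteq> Pow E \<and> {} \<in> I
     \<and> (\<forall>X Y. X \<in> I \<and> Y \<subseteq> X \<longrightarrow> Y \<in> I)
     \<and> (\<forall>X Y. X \<in> I \<and> Y \<in> I \<and> card X < card Y \<longrightarrow> (\<exists>e \<in> Y - X. insert e X \<in> I))"

definition mrank :: "'a set set \<Rightarrow> nat" where
  "mrank I = Max (card ` I)"

datatype aggop = OpMax | OpMin | OpSum

definition opval :: "aggop \<Rightarrow> ('b \<Rightarrow> real) \<Rightarrow> 'b set \<Rightarrow> real" where
  "opval Op f A = (case Op of OpMax \<Rightarrow> Max (f ` A) | OpMin \<Rightarrow> Min (f ` A) | OpSum \<Rightarrow> sum f A)"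

definition feasible_partition :: "nat \<Rightarrow> (nat \<Rightarrow> 'a set set) \<Rightarrow> 'a set \<Rightarrow> (nat \<Rightarrow> 'a set) \<Rightarrow> bool" where
  "feasible_partition k Is X P \<longleftrightarrow>
     (\<forall>i j. i < k \<and> j < k \<and> i \<noteq> j \<longrightarrow> P i \<inter> P j = {})
     \<and> (\<Union>i<k. P i) = X
     \<and> (\<forall>i<k. P i \<noteq> {} \<and> P i \<in> Is i)
     \<and> (\<forall>i. k \<le> i \<longrightarrow> P i = {})"

definition partition_value :: "aggop \<Rightarrow> aggop \<Rightarrow> nat \<Rightarrow> (nat \<Rightarrow> 'a \<Rightarrow> real) \<Rightarrow> (nat \<Rightarrow> 'a set) \<Rightarrow> real" where
  "partition_value Op1 Op2 k w P = opval Op1 (\<lambda>i. opval Op2 (w i) (P i)) {..<k}"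

definition partition_values :: "aggop \<Rightarrow> aggop \<Rightarrow> nat \<Rightarrow> (nat \<Rightarrow> 'a set set) \<Rightarrow> (nat \<Rightarrow> 'a \<Rightarrow> real) \<Rightarrow> 'a set \<Rightarrow> real set" where
  "partition_values Op1 Op2 k Is w X = {partition_value Op1 Op2 k w P | P. feasible_partition k Is X P}"

definition ext_indep :: "'a set set \<Rightarrow> 'a set \<Rightarrow> 'a set set" where
  "ext_indep I D = {J \<union> D' | J D'. J \<in> I \<and> D' \<subseteq> D \<and> int (card D') \<le> int (mrank I) - 1
                       \<and> card (J \<union> D') \<le> mrank I}"

definition ext_weight :: "aggop \<Rightarrow> 'a set \<Rightarrow> ('a \<Rightarrow> real) \<Rightarrow> 'a \<Rightarrow> real" where
  "ext_weight Op2 E w e = (if e \<in> E then w e else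
     (case Op2 of OpMax \<Rightarrow> Min (w ` E) | OpMin \<Rightarrow> Max (w ` E) | OpSum \<Rightarrow> 0))"

end

theory Submission
  imports Defs
begin

text \<open>Since the ranks of the k matroids sum to |E \<union> D|, every feasible partition of E \<union> D
  uses each part at full rank; a full-rank set of the truncated union must contain an element
  of E, so intersecting with E gives a feasible partition of E. Conversely a feasible partition
  of E is completed to one of E \<union> D by distributing D so that each part is filled up to its
  rank. The extended weights on D never change the inner aggregate of a part that meets E, so
  the two sets of partition values coincide.\<close>

lemma opval_cong: "(\<And>x. x \<in> A \<Longrightarrow> f x = g x) \<Longrightarrow> opval Op f A = opval Op g A"
  by (cases Op) (simp_all add: opval_def cong: image_cong sum.cong)

lemma opval_ext_weight:
  assumes "finite A" "finite E" "A \<inter> E \<noteq> {}"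
  shows "opval Op (ext_weight Op E f) A = opval Op f (A \<inter> E)"
proof -
  let ?g = "ext_weight Op E f"
  obtain e where e: "e \<in> A \<inter> E" using assms(3) by blast
  have fin: "finite (A \<inter> E)" using assms(1) by simp
  have g_E: "?g x = f x" if "x \<in> E" for x using that by (simp add: ext_weight_def)
  have image_sub: "f ` (A \<inter> E) \<subseteq> ?g ` A" using g_E by force
  have nonempty: "f ` (A \<inter> E) \<noteq> {}" using e by blast
  show ?thesis
  proof (cases Op)
    case OpSum
    have "sum ?g A = sum ?g (A \<inter> E) + sum ?g (A - E)" by (rule sum.Int_Diff[OF assms(1)])
    moreover have "sum ?g (A - E) = 0" by (rule sum.neutral) (simp add: ext_weight_def OpSum)
    ultimately show ?thesis using g_E by (simp add: opval_def OpSum)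
  next
    case OpMax
    have "?g x \<le> Max (f ` (A \<inter> E))" if "x \<in> A" for x
    proof (cases "x \<in> E")
      case False
      have "Min (f ` E) \<le> f e" using e assms(2) by simp
      also have "f e \<le> Max (f ` (A \<inter> E))" using e fin by simp
      finally show ?thesis using False by (simp add: ext_weight_def OpMax)
    qed (use that fin g_E in simp)
    then have "Max (?g ` A) = Max (f ` (A \<inter> E))"
      using Max_in[OF finite_imageI[OF fin] nonempty] image_sub assms(1) by (intro Max_eqI) auto
    then show ?thesis by (simp add: opval_def OpMax)
  next
    case OpMin
    have "Min (f ` (A \<inter> E)) \<le> ?g x" if "x \<in> A" for x
    proof (cases "x \<in> E")
      case False
      have "Min (f ` (A \<inter> E)) \<le> f e" using e fin by simp
      also have "f e \<le> Max (f ` E)" using e assms(2) by simp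
      finally show ?thesis using False by (simp add: ext_weight_def OpMin)
    qed (use that fin g_E in simp)
    then have "Min (?g ` A) = Min (f ` (A \<inter> E))"
      using Min_in[OF finite_imageI[OF fin] nonempty] image_sub assms(1) by (intro Min_eqI) auto
    then show ?thesis by (simp add: opval_def OpMin)
  qed
qed

lemma partition_value_ext_weight:
  assumes "finite E" "\<forall>i<k. finite (Q i) \<and> Q i \<inter> E \<noteq> {}"
  shows "partition_value Op1 Op2 k (\<lambda>i. ext_weight Op2 E (w i)) Q
       = partition_value Op1 Op2 k w (\<lambda>i. Q i \<inter> E)"
  unfolding partition_value_def using assms by (intro opval_cong opval_ext_weight) auto

lemma card_le_mrank:
  assumes "matroid E I" "J \<in> I"
  shows "card J \<le> mrank I"
proof -
  have "finite I" using assms(1) unfolding matroid_def by (meson finite_Pow_iff finite_subset)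
  then show ?thesis unfolding mrank_def using assms(2) by simp
qed

lemma card_ext_indep_le: "Q \<in> ext_indep I D \<Longrightarrow> card Q \<le> mrank I"
  unfolding ext_indep_def by blast

lemma ext_indep_full_rank_restrict:
  assumes "I \<subseteq> Pow E" "D \<inter> E = {}" "Q \<in> ext_indep I D" "card Q = mrank I"
  shows "Q \<inter> E \<in> I" "Q \<inter> E \<noteq> {}"
proof -
  obtain J D' where Q: "Q = J \<union> D'" "J \<in> I" "D' \<subseteq> D" "int (card D') \<le> int (mrank I) - 1"
    using assms(3) unfolding ext_indep_def by blast
  have "Q \<inter> E = J" using Q(1-3) assms(1,2) by auto
  moreover have "J \<noteq> {}"
  proof
    assume "J = {}"
    then have "card D' = mrank I" using Q(1) assms(4) by simp
    then show False using Q(4) by linarith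
  qed
  ultimately show "Q \<inter> E \<in> I" "Q \<inter> E \<noteq> {}" using Q(2) by simp_all
qed

lemma ext_indep_fill_up:
  assumes "J \<in> I" "J \<noteq> {}" "finite J" "D' \<subseteq> D" "finite D'" "J \<inter> D' = {}"
    and "card J + card D' = mrank I"
  shows "J \<union> D' \<in> ext_indep I D"
proof -
  have "card J \<ge> 1" using assms(2,3) by (simp add: Suc_le_eq card_gt_0_iff)
  then have "int (card D') \<le> int (mrank I) - 1" using assms(7) by linarith
  moreover have "card (J \<union> D') = mrank I" using assms(3,5-7) by (simp add: card_Un_disjoint)
  ultimately show ?thesis
    unfolding ext_indep_def mem_Collect_eq using assms(1,4) by (intro exI[of _ J] exI[of _ D']) simp
qed

lemma sum_card_feasible_partition:
  assumes "finite X" "feasible_partition k Is X P"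
  shows "(\<Sum>i<k. card (P i)) = card X"
proof -
  have "\<forall>i<k. \<forall>j<k. i \<noteq> j \<longrightarrow> P i \<inter> P j = {}" "(\<Union>i<k. P i) = X"
    using assms(2) unfolding feasible_partition_def by auto
  moreover have "\<forall>i<k. finite (P i)" using \<open>(\<Union>i<k. P i) = X\<close> assms(1) by (auto intro: finite_subset)
  ultimately show ?thesis by (metis card_UN_disjoint finite_lessThan lessThan_iff)
qed

lemma exists_partition_with_cards:
  fixes n :: "nat \<Rightarrow> nat" and D :: "'a set"
  assumes "finite D" "(\<Sum>i<k. n i) = card D"
  shows "\<exists>F. (\<forall>i<k. card (F i) = n i) \<and> (\<forall>i<k. \<forall>j<k. i \<noteq> j \<longrightarrow> F i \<inter> F j = {})
    \<and> (\<Union>i<k. F i) = D \<and> (\<forall>i\<ge>k. F i = {})"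
  using assms
proof (induction k arbitrary: D)
  case 0
  then show ?case by auto
next
  case (Suc k)
  obtain S where S: "S \<subseteq> D" "card S = n k"
    using Suc.prems obtain_subset_with_card_n[of "n k" D] by auto
  have "(\<Sum>i<k. n i) = card (D - S)"
    using Suc.prems S by (simp add: card_Diff_subset finite_subset)
  then obtain F where F: "\<forall>i<k. card (F i) = n i" "\<forall>i<k. \<forall>j<k. i \<noteq> j \<longrightarrow> F i \<inter> F j = {}"
      "(\<Union>i<k. F i) = D - S" "\<forall>i\<ge>k. F i = {}"
    using Suc.IH[of "D - S"] Suc.prems(1) by auto
  have "\<forall>i<k. F i \<subseteq> D - S" using F(3) by auto
  then have "(\<forall>i<Suc k. card ((F(k := S)) i) = n i)
    \<and> (\<forall>i<Suc k. \<forall>j<Suc k. i \<noteq> j \<longrightarrow> (F(k := S)) i \<inter> (F(k := S)) j = {})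
    \<and> (\<Union>i<Suc k. (F(k := S)) i) = D \<and> (\<forall>i\<ge>Suc k. (F(k := S)) i = {})"
    using F S by (auto simp: less_Suc_eq lessThan_Suc)
  then show ?case by blast
qed

lemma feasible_partition_restrict:
  assumes finE: "finite E" and finD: "finite D" and disj: "D \<inter> E = {}"
    and mat: "\<forall>i<k. matroid E (Is i)"
    and ranks: "card E + card D = (\<Sum>i<k. mrank (Is i))"
    and Q: "feasible_partition k (\<lambda>i. ext_indep (Is i) D) (E \<union> D) Q"
  shows "feasible_partition k Is E (\<lambda>i. Q i \<inter> E)"
proof -
  have Q_disj: "\<forall>i j. i < k \<and> j < k \<and> i \<noteq> j \<longrightarrow> Q i \<inter> Q j = {}"
    and QU: "(\<Union>i<k. Q i) = E \<union> D" and Q_indep: "\<forall>i<k. Q i \<in> ext_indep (Is i) D"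
    and Q_out: "\<forall>i\<ge>k. Q i = {}"
    using Q unfolding feasible_partition_def by blast+
  have "card (E \<union> D) = card E + card D"
    using finE finD disj by (simp add: card_Un_disjoint Int_commute)
  then have "(\<Sum>i<k. card (Q i)) = (\<Sum>i<k. mrank (Is i))"
    using sum_card_feasible_partition[OF _ Q] finE finD ranks by simp
  then have full: "card (Q i) = mrank (Is i)" if "i < k" for i
    by (rule sum_mono_inv) (use that Q_indep card_ext_indep_le in auto)
  have "Q i \<inter> E \<in> Is i \<and> Q i \<inter> E \<noteq> {}" if "i < k" for i
  proof -
    have "Is i \<subseteq> Pow E" using mat that unfolding matroid_def by blast
    moreover have "Q i \<in> ext_indep (Is i) D" using Q_indep that by blast
    ultimately show ?thesis
      using ext_indep_full_rank_restrict[OF _ disj _ full[OF that]] by blast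
  qed
  moreover have "(\<Union>i<k. Q i \<inter> E) = E" using QU by blast
  ultimately show ?thesis
    unfolding feasible_partition_def using Q_disj Q_out by blast
qed

lemma feasible_partition_extend:
  assumes finE: "finite E" and finD: "finite D" and disj: "D \<inter> E = {}"
    and mat: "\<forall>i<k. matroid E (Is i)"
    and ranks: "card E + card D = (\<Sum>i<k. mrank (Is i))"
    and P: "feasible_partition k Is E P"
  shows "\<exists>Q. feasible_partition k (\<lambda>i. ext_indep (Is i) D) (E \<union> D) Q \<and> (\<forall>i. Q i \<inter> E = P i)"
proof -
  have P_indep: "\<forall>i<k. P i \<noteq> {} \<and> P i \<in> Is i" and PU: "(\<Union>i<k. P i) = E"
    and P_out: "\<forall>i\<ge>k. P i = {}" and P_disj: "\<forall>i<k. \<forall>j<k. i \<noteq> j \<longrightarrow> P i \<inter> P j = {}"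
    using P unfolding feasible_partition_def by auto
  have P_le: "card (P i) \<le> mrank (Is i)" if "i < k" for i
    using that mat P_indep card_le_mrank by blast
  have "(\<Sum>i<k. mrank (Is i) - card (P i)) = card D"
    using sum_subtractf_nat[of "{..<k}" "\<lambda>i. card (P i)" "\<lambda>i. mrank (Is i)"] P_le
      sum_card_feasible_partition[OF finE P] ranks by simp
  from exists_partition_with_cards[OF finD this]
  obtain F where F: "\<forall>i<k. card (F i) = mrank (Is i) - card (P i)"
      "\<forall>i<k. \<forall>j<k. i \<noteq> j \<longrightarrow> F i \<inter> F j = {}" "(\<Union>i<k. F i) = D" "\<forall>i\<ge>k. F i = {}"
    by (elim exE conjE) (rule that)
  define Q where "Q i = P i \<union> F i" for i
  have P_sub: "P i \<subseteq> E" and F_sub: "F i \<subseteq> D" for i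
    using PU F(3,4) P_out by (cases "i < k"; auto)+
  have "Q i \<in> ext_indep (Is i) D" if "i < k" for i
    unfolding Q_def using that P_indep P_le F(1) P_sub[of i] F_sub[of i] disj finE finD
    by (intro ext_indep_fill_up) (auto intro: finite_subset)
  moreover have "Q i \<inter> Q j = {}" if "i < k" "j < k" "i \<noteq> j" for i j
    unfolding Q_def using that P_disj F(2) P_sub F_sub disj by blast
  ultimately have "feasible_partition k (\<lambda>i. ext_indep (Is i) D) (E \<union> D) Q"
    unfolding feasible_partition_def Q_def using P_indep PU F(3,4) P_out by auto
  moreover have "Q i \<inter> E = P i" for i unfolding Q_def using P_sub F_sub disj by blast
  ultimately show ?thesis by blast
qed

lemma partition_values_ext_eq:
  assumes finE: "finite E" and finD: "finite D" and disj: "D \<inter> E = {}"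
    and mat: "\<forall>i<k. matroid E (Is i)"
    and ranks: "card E + card D = (\<Sum>i<k. mrank (Is i))"
  shows "partition_values Op1 Op2 k (\<lambda>i. ext_indep (Is i) D) (\<lambda>i. ext_weight Op2 E (w i)) (E \<union> D)
       = partition_values Op1 Op2 k Is w E"
proof -
  have value_eq: "partition_value Op1 Op2 k (\<lambda>i. ext_weight Op2 E (w i)) Q
      = partition_value Op1 Op2 k w (\<lambda>i. Q i \<inter> E)"
    if "feasible_partition k (\<lambda>i. ext_indep (Is i) D) (E \<union> D) Q" for Q
  proof (rule partition_value_ext_weight[OF finE])
    have "(\<Union>i<k. Q i) = E \<union> D" using that unfolding feasible_partition_def by blast
    then show "\<forall>i<k. finite (Q i) \<and> Q i \<inter> E \<noteq> {}"
      using feasible_partition_restrict[OF assms that] finE finD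
      unfolding feasible_partition_def by (auto intro: finite_subset)
  qed
  show ?thesis
  proof (intro equalityI subsetI)
    fix v assume "v \<in> partition_values Op1 Op2 k (\<lambda>i. ext_indep (Is i) D)
        (\<lambda>i. ext_weight Op2 E (w i)) (E \<union> D)"
    then obtain Q where "feasible_partition k (\<lambda>i. ext_indep (Is i) D) (E \<union> D) Q"
      and "v = partition_value Op1 Op2 k (\<lambda>i. ext_weight Op2 E (w i)) Q"
      unfolding partition_values_def by blast
    then show "v \<in> partition_values Op1 Op2 k Is w E"
      using value_eq feasible_partition_restrict[OF assms] unfolding partition_values_def by blast
  next
    fix v assume "v \<in> partition_values Op1 Op2 k Is w E"
    then obtain P where P: "feasible_partition k Is E P" and v: "v = partition_value Op1 Op2 k w P"
      unfolding partition_values_def by blast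
    then obtain Q where Q: "feasible_partition k (\<lambda>i. ext_indep (Is i) D) (E \<union> D) Q"
      and "\<forall>i. Q i \<inter> E = P i"
      using feasible_partition_extend[OF assms] by blast
    then have "v = partition_value Op1 Op2 k (\<lambda>i. ext_weight Op2 E (w i)) Q"
      using value_eq[OF Q] v by simp
    then show "v \<in> partition_values Op1 Op2 k (\<lambda>i. ext_indep (Is i) D)
        (\<lambda>i. ext_weight Op2 E (w i)) (E \<union> D)"
      using Q unfolding partition_values_def by blast
  qed
qed

theorem mainTheorem1:
  fixes E D :: "'a set" and k :: nat and Is :: "nat \<Rightarrow> 'a set set"
    and w :: "nat \<Rightarrow> 'a \<Rightarrow> real" and Op1 Op2 :: aggop
  assumes finE: "finite E"
    and mat: "\<forall>i<k. matroid E (Is i)"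
    and wpos: "\<forall>i<k. \<forall>e\<in>E. w i e \<ge> 0"
    and rnonneg: "(\<Sum>i<k. int (mrank (Is i))) - int (card E) \<ge> 0"
    and finD: "finite D"
    and cardD: "int (card D) = (\<Sum>i<k. int (mrank (Is i))) - int (card E)"
    and disj: "D \<inter> E = {}"
  shows "(partition_values Op1 Op2 k Is w E = {}
            \<longleftrightarrow> partition_values Op1 Op2 k (\<lambda>i. ext_indep (Is i) D)
                  (\<lambda>i. ext_weight Op2 E (w i)) (E \<union> D) = {})
       \<and> (partition_values Op1 Op2 k Is w E \<noteq> {} \<longrightarrow>
            Min (partition_values Op1 Op2 k Is w E)
          = Min (partition_values Op1 Op2 k (\<lambda>i. ext_indep (Is i) D)
                  (\<lambda>i. ext_weight Op2 E (w i)) (E \<union> D)))"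
proof -
  have "int (card E + card D) = int (\<Sum>i<k. mrank (Is i))" using cardD by simp
  then have "card E + card D = (\<Sum>i<k. mrank (Is i))" by (simp only: of_nat_eq_iff)
  then show ?thesis using partition_values_ext_eq[OF finE finD disj mat] by simp
qed

end
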